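(* For $k\ge1$, let $\mathcal B_k$ be the set of $k\times k$ symmetric matrices over $\mathbb F_2$ of rank $k-1$ with every row sum $0$. Then $\#\mathcal B_k=u_k\cdot2^{\binom k2}$, where $u_k=\prod_{i=1}^{\lfloor k/2\rfloor}(1-2^{1-2i})$. *)

theory Defs
  imports Complex_Main "HOL-Library.Z2" "Jordan_Normal_Form.DL_Rank"
begin

definition B_set :: "nat \<Rightarrow> bit mat set" where
  "B_set k = {A \<in> carrier_mat k k.
      transpose_mat A = A \<and>
      vec_space.rank k A = k - 1 \<and>
      (\<forall>i<k. (\<Sum>j<k. A $$ (i, j)) = 0)}"

definition u :: "nat \<Rightarrow> real" where
  "u k = (\<Prod>i\<in>{1..k div 2}. 1 - 2 powi (1 - 2 * int i))"

end

theory Submission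
  imports Defs "Jordan_Normal_Form.DL_Rank_Submatrix"
begin

text \<open>A symmetric matrix over \<open>F\<^sub>2\<close> with zero row sums is determined by its upper left
  \<open>(k-1) \<times> (k-1)\<close> block \<open>S\<close>, which is symmetric, and it has rank \<open>k - 1\<close> exactly when \<open>S\<close> is
  nonsingular: a kernel vector of \<open>S\<close> together with the all-ones vector gives two independent
  relations among the columns. Hence \<open>#\<B>\<^sub>k = N(k-1)\<close>, where \<open>N(m)\<close> counts the nonsingular
  symmetric \<open>m \<times> m\<close> matrices.

  Border a symmetric matrix \<open>C\<close> by a new index with diagonal entry \<open>a\<close> and column \<open>b\<close>. If
  \<open>a = 1\<close>, the result is nonsingular iff the Schur complement \<open>C + b b\<^sup>T\<close> is; if \<open>a = 0\<close> and
  \<open>b = 0\<close> it is singular; if \<open>a = 0\<close> and \<open>b\<^sub>j = 1\<close>, eliminating the invertible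
  \<open>2 \<times> 2\<close> pivot block on the new index and \<open>j\<close> leaves a Schur complement of size two less.
  Since translation by a fixed symmetric matrix permutes the symmetric matrices, this gives
  \<open>N(m+1) = 2\<^sup>m N(m) + (2\<^sup>m - 1) 2\<^sup>m N(m-1)\<close>, whose solution is
  \<open>N(m) = u\<^sub>m\<^sub>+\<^sub>1 2\<^bsup>binom(m+1,2)\<^esup>\<close>.\<close>

section \<open>Symmetric matrices over \<open>F\<^sub>2\<close> on finite index sets\<close>

declare add_bit_eq_xor [simp del] mult_bit_eq_and [simp del]
  \<comment> \<open>keep \<open>F\<^sub>2\<close> arithmetic in ring form instead of \<open>xor\<close>/\<open>and\<close>\<close>

lemma bit_UNIV: "(UNIV :: bit set) = {0, 1}"
  by (auto intro: bit_not_zero_iff)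

lemma bit_add_eq_0_iff: "(x :: bit) + y = 0 \<longleftrightarrow> x = y"
  by (cases x; cases y) simp_all

text \<open>A square matrix over \<open>F\<^sub>2\<close> indexed by a finite set \<open>J \<subseteq> \<nat>\<close> is a function
  \<open>nat \<Rightarrow> nat \<Rightarrow> bit\<close> vanishing outside \<open>J \<times> J\<close>, and a vector is a function vanishing
  outside \<open>J\<close>; adjoining a new index is then a pointwise update.\<close>

definition supp_vecs :: "nat set \<Rightarrow> (nat \<Rightarrow> bit) set" where
  "supp_vecs J = {b. \<forall>x. x \<notin> J \<longrightarrow> b x = 0}"

definition sym_mats_on :: "nat set \<Rightarrow> (nat \<Rightarrow> nat \<Rightarrow> bit) set" where
  "sym_mats_on J = {C. (\<forall>x y. C x y = C y x) \<and> (\<forall>x y. x \<notin> J \<longrightarrow> C x y = 0)}"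

definition mult_on :: "(nat \<Rightarrow> nat \<Rightarrow> bit) \<Rightarrow> nat set \<Rightarrow> (nat \<Rightarrow> bit) \<Rightarrow> nat \<Rightarrow> bit" where
  "mult_on C J v x = (\<Sum>j\<in>J. C x j * v j)"

definition kernel_on :: "nat set \<Rightarrow> (nat \<Rightarrow> nat \<Rightarrow> bit) \<Rightarrow> (nat \<Rightarrow> bit) \<Rightarrow> bool" where
  "kernel_on J C v \<longleftrightarrow> (\<forall>x\<in>J. mult_on C J v x = 0)"

definition nonsingular_on :: "nat set \<Rightarrow> (nat \<Rightarrow> nat \<Rightarrow> bit) \<Rightarrow> bool" where
  "nonsingular_on J C \<longleftrightarrow> (\<forall>v. kernel_on J C v \<longrightarrow> (\<forall>x\<in>J. v x = 0))"

definition nonsingular_sym_on :: "nat set \<Rightarrow> (nat \<Rightarrow> nat \<Rightarrow> bit) set" where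
  "nonsingular_sym_on J = {C \<in> sym_mats_on J. nonsingular_on J C}"

definition border ::
  "nat \<Rightarrow> bit \<Rightarrow> (nat \<Rightarrow> bit) \<Rightarrow> (nat \<Rightarrow> nat \<Rightarrow> bit) \<Rightarrow> nat \<Rightarrow> nat \<Rightarrow> bit" where
  "border i a b C x y = (if x = i then (if y = i then a else b y) else if y = i then b x else C x y)"

text \<open>Eliminating the pivot block \<open>[0 1; 1 c]\<close> on two indices, whose inverse over \<open>F\<^sub>2\<close> is
  \<open>[c 1; 1 0]\<close>, from a symmetric matrix with off-pivot columns \<open>b\<close>, \<open>d\<close> and remaining block
  \<open>D\<close> leaves the Schur complement \<open>D + pivot_term c b d\<close>.\<close>

definition pivot_term :: "bit \<Rightarrow> (nat \<Rightarrow> bit) \<Rightarrow> (nat \<Rightarrow> bit) \<Rightarrow> nat \<Rightarrow> nat \<Rightarrow> bit" where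
  "pivot_term c b d x y = c * b x * b y + b x * d y + d x * b y"

lemma bij_betw_restrict_supp_vecs:
  "bij_betw (\<lambda>b. restrict b J) (supp_vecs J) (J \<rightarrow>\<^sub>E UNIV)"
  by (rule bij_betwI[where g = "\<lambda>f x. if x \<in> J then f x else 0"])
     (auto simp: supp_vecs_def fun_eq_iff PiE_def extensional_def)

lemma finite_supp_vecs: "finite J \<Longrightarrow> finite (supp_vecs J)"
  using bij_betw_finite[OF bij_betw_restrict_supp_vecs] by (simp add: finite_PiE bit_UNIV)

lemma card_supp_vecs: "finite J \<Longrightarrow> card (supp_vecs J) = 2 ^ card J"
  using bij_betw_same_card[OF bij_betw_restrict_supp_vecs] by (simp add: card_PiE bit_UNIV numeral_2_eq_2)

lemma finite_sym_mats_on: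
  assumes "finite J"
  shows "finite (sym_mats_on J)"
proof -
  have "sym_mats_on J \<subseteq> (\<lambda>f x y. if x \<in> J \<and> y \<in> J then f (x, y) else 0) ` (J \<times> J \<rightarrow>\<^sub>E UNIV)"
  proof
    fix C assume C: "C \<in> sym_mats_on J"
    show "C \<in> (\<lambda>f x y. if x \<in> J \<and> y \<in> J then f (x, y) else 0) ` (J \<times> J \<rightarrow>\<^sub>E UNIV)"
    proof (rule image_eqI[where x = "restrict (case_prod C) (J \<times> J)"])
      show "C = (\<lambda>x y. if x \<in> J \<and> y \<in> J then restrict (case_prod C) (J \<times> J) (x, y) else 0)"
        using C unfolding sym_mats_on_def by (auto simp: fun_eq_iff) metis+
    qed auto
  qed
  moreover have "finite (J \<times> J \<rightarrow>\<^sub>E (UNIV :: bit set))"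
    using assms by (simp add: finite_PiE bit_UNIV)
  ultimately show ?thesis
    using finite_subset by blast
qed

lemma sym_mats_on_add:
  "C \<in> sym_mats_on J \<Longrightarrow> F \<in> sym_mats_on J \<Longrightarrow> (\<lambda>x y. C x y + F x y) \<in> sym_mats_on J"
  unfolding sym_mats_on_def by auto

lemma outer_in_sym_mats_on: "b \<in> supp_vecs J \<Longrightarrow> (\<lambda>x y. b x * b y) \<in> sym_mats_on J"
  unfolding sym_mats_on_def supp_vecs_def by (auto simp: mult.commute)

lemma pivot_term_in_sym_mats_on:
  "b \<in> supp_vecs J \<Longrightarrow> d \<in> supp_vecs J \<Longrightarrow> pivot_term c b d \<in> sym_mats_on J"
  unfolding sym_mats_on_def supp_vecs_def pivot_term_def by (auto simp: algebra_simps)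

lemma border_simps [simp]:
  "border i a b C i i = a"
  "y \<noteq> i \<Longrightarrow> border i a b C i y = b y"
  "x \<noteq> i \<Longrightarrow> border i a b C x i = b x"
  "x \<noteq> i \<Longrightarrow> y \<noteq> i \<Longrightarrow> border i a b C x y = C x y"
  by (simp_all add: border_def)

lemma bij_betw_border:
  assumes "i \<notin> J"
  shows "bij_betw (\<lambda>(a, b, C). border i a b C)
    (UNIV \<times> supp_vecs J \<times> sym_mats_on J) (sym_mats_on (insert i J))"
proof -
  let ?f = "\<lambda>(a, b, C). border i a b C"
  let ?g = "\<lambda>A. (A i i, \<lambda>y. if y \<in> J then A i y else 0,
                  \<lambda>x y. if x \<in> J \<and> y \<in> J then A x y else 0)"
  show ?thesis
  proof (rule bij_betwI[where g = ?g])
    show "?f \<in> UNIV \<times> supp_vecs J \<times> sym_mats_on J \<rightarrow> sym_mats_on (insert i J)"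
      using assms by (auto simp: sym_mats_on_def supp_vecs_def border_def)
    show "?g \<in> sym_mats_on (insert i J) \<rightarrow> UNIV \<times> supp_vecs J \<times> sym_mats_on J"
      by (auto simp: sym_mats_on_def supp_vecs_def)
    show "?g (?f t) = t" if "t \<in> UNIV \<times> supp_vecs J \<times> sym_mats_on J" for t
      using that assms by (auto simp: sym_mats_on_def supp_vecs_def border_def fun_eq_iff) metis+
    show "?f (?g A) = A" if "A \<in> sym_mats_on (insert i J)" for A
      using that by (auto simp: sym_mats_on_def border_def fun_eq_iff) metis+
  qed
qed

section \<open>Nonsingularity of bordered matrices\<close>

lemma mult_on_cong: "(\<And>y. y \<in> J \<Longrightarrow> v y = w y) \<Longrightarrow> mult_on C J v x = mult_on C J w x"
  unfolding mult_on_def by (intro sum.cong) auto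

lemma mult_on_add_outer:
  "mult_on (\<lambda>x y. C x y + b x * e y) J w x = mult_on C J w x + b x * (\<Sum>j\<in>J. e j * w j)"
  unfolding mult_on_def by (simp add: sum.distrib sum_distrib_left algebra_simps)

lemma mult_on_add_pivot_term:
  "mult_on (\<lambda>x y. D x y + pivot_term c b d x y) J w x = mult_on D J w x
     + c * b x * (\<Sum>j\<in>J. b j * w j) + b x * (\<Sum>j\<in>J. d j * w j) + d x * (\<Sum>j\<in>J. b j * w j)"
  unfolding mult_on_def pivot_term_def by (simp add: sum.distrib sum_distrib_left algebra_simps)

lemma mult_on_border_new:
  assumes "finite J" "i \<notin> J"
  shows "mult_on (border i a b C) (insert i J) v i = a * v i + (\<Sum>j\<in>J. b j * v j)"
proof -
  have "(\<Sum>j\<in>J. border i a b C i j * v j) = (\<Sum>j\<in>J. b j * v j)"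
    using assms(2) by (intro sum.cong refl) (metis border_simps(2))
  then show ?thesis
    unfolding mult_on_def using assms by simp
qed

lemma mult_on_border_old:
  assumes "finite J" "i \<notin> J" "x \<in> J"
  shows "mult_on (border i a b C) (insert i J) v x = b x * v i + mult_on C J v x"
proof -
  have "(\<Sum>j\<in>J. border i a b C x j * v j) = mult_on C J v x"
    unfolding mult_on_def using assms(2,3) by (intro sum.cong refl) (metis border_simps(4))
  moreover have "x \<noteq> i"
    using assms(2,3) by auto
  ultimately show ?thesis
    unfolding mult_on_def using assms by simp
qed

lemma nonsingular_on_transfer:
  assumes "K \<subseteq> I"
    and restrict: "\<And>v. kernel_on I A v \<Longrightarrow> kernel_on K B v"
    and lift: "\<And>w. kernel_on K B w \<Longrightarrow> \<exists>v. kernel_on I A v \<and> (\<forall>x\<in>K. v x = w x)"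
    and determined: "\<And>v. kernel_on I A v \<Longrightarrow> \<forall>x\<in>K. v x = 0 \<Longrightarrow> \<forall>x\<in>I. v x = 0"
  shows "nonsingular_on I A \<longleftrightarrow> nonsingular_on K B"
proof
  assume "nonsingular_on I A"
  then show "nonsingular_on K B"
    unfolding nonsingular_on_def using lift \<open>K \<subseteq> I\<close> by (metis subsetD)
next
  assume "nonsingular_on K B"
  then show "nonsingular_on I A"
    unfolding nonsingular_on_def using restrict determined by blast
qed

lemma nonsingular_border_one:
  assumes "finite J" "i \<notin> J"
  shows "nonsingular_on (insert i J) (border i 1 b C) \<longleftrightarrow> nonsingular_on J (\<lambda>x y. C x y + b x * b y)"
proof (rule nonsingular_on_transfer)
  let ?s = "\<lambda>v. \<Sum>j\<in>J. b j * v j"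
  have row_new: "kernel_on (insert i J) (border i 1 b C) v \<Longrightarrow> v i = ?s v" for v
    using mult_on_border_new[OF assms] unfolding kernel_on_def by (simp add: bit_add_eq_0_iff)
  have row_old: "mult_on (border i 1 b C) (insert i J) v x = mult_on (\<lambda>x y. C x y + b x * b y) J v x"
    if "x \<in> J" "v i = ?s v" for v x
    using that mult_on_border_old[OF assms that(1)] mult_on_add_outer by (simp add: add.commute)
  show "kernel_on J (\<lambda>x y. C x y + b x * b y) v" if "kernel_on (insert i J) (border i 1 b C) v" for v
    using that row_new[OF that] row_old unfolding kernel_on_def by simp
  show "\<exists>v. kernel_on (insert i J) (border i 1 b C) v \<and> (\<forall>x\<in>J. v x = w x)"
    if "kernel_on J (\<lambda>x y. C x y + b x * b y) w" for w
  proof (intro exI conjI)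
    let ?v = "w(i := ?s w)"
    have agree: "\<forall>x\<in>J. ?v x = w x" using assms(2) by auto
    then have "?s ?v = ?s w" by (intro sum.cong) auto
    then have "?v i = ?s ?v" by simp
    moreover have "mult_on (\<lambda>x y. C x y + b x * b y) J ?v x = 0" if "x \<in> J" for x
      using \<open>kernel_on J _ w\<close> that mult_on_cong[of J ?v w] agree unfolding kernel_on_def by auto
    ultimately show "kernel_on (insert i J) (border i 1 b C) ?v"
      using mult_on_border_new[OF assms] row_old unfolding kernel_on_def by auto
  qed (use assms(2) in auto)
  show "\<forall>x\<in>insert i J. v x = 0" if "kernel_on (insert i J) (border i 1 b C) v" "\<forall>x\<in>J. v x = 0" for v
    using that row_new[OF that(1)] by simp
qed auto

lemma singular_border_zero:
  assumes "finite J" "i \<notin> J"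
  shows "\<not> nonsingular_on (insert i J) (border i 0 (\<lambda>_. 0) C)"
proof -
  let ?e = "\<lambda>x. if x = i then 1 else 0 :: bit"
  have "mult_on C J ?e x = 0" for x
    unfolding mult_on_def using assms(2) by (intro sum.neutral) auto
  then have "kernel_on (insert i J) (border i 0 (\<lambda>_. 0) C) ?e"
    unfolding kernel_on_def using mult_on_border_new[OF assms] mult_on_border_old[OF assms] by auto
  then show ?thesis
    unfolding nonsingular_on_def by force
qed

lemma nonsingular_border_hyperbolic:
  assumes "finite K" "i \<notin> insert j K" "j \<notin> K"
  shows "nonsingular_on (insert i (insert j K)) (border i 0 (b(j := 1)) (border j c d D))
    \<longleftrightarrow> nonsingular_on K (\<lambda>x y. D x y + pivot_term c b d x y)"
proof (rule nonsingular_on_transfer)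
  let ?I = "insert i (insert j K)"
  let ?A = "border i 0 (b(j := 1)) (border j c d D)"
  let ?B = "\<lambda>x y. D x y + pivot_term c b d x y"
  let ?T = "\<lambda>v. \<Sum>y\<in>K. b y * v y"
  let ?U = "\<lambda>v. \<Sum>y\<in>K. d y * v y"
  have fin: "finite (insert j K)" using assms(1) by simp
  have ij: "i \<noteq> j" using assms(2) by auto
  have row_i: "mult_on ?A ?I v i = v j + ?T v" for v
  proof -
    have "(\<Sum>y\<in>K. (b(j := 1)) y * v y) = ?T v"
      using assms(3) by (intro sum.cong) auto
    then show ?thesis
      using mult_on_border_new[OF fin assms(2)] assms(1,3) by simp
  qed
  have row_j: "mult_on ?A ?I v j = v i + c * v j + ?U v" for v
    using mult_on_border_old[OF fin assms(2), of j] mult_on_border_new[OF assms(1,3), of c d D v]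
    by (simp add: add.assoc)
  have row_K: "mult_on ?A ?I v x = b x * v i + d x * v j + mult_on D K v x" if "x \<in> K" for v x
    using that assms(3) mult_on_border_old[OF fin assms(2), of x] mult_on_border_old[OF assms(1,3) that]
    by (auto simp: add.assoc)
  have row_B: "mult_on ?B K v x = b x * v i + d x * v j + mult_on D K v x"
    if "v j = ?T v" "v i = c * v j + ?U v" for v x
    using that by (simp add: mult_on_add_pivot_term algebra_simps)
  have kernel_A: "kernel_on ?I ?A v \<longleftrightarrow>
      v j = ?T v \<and> v i = c * v j + ?U v \<and> (\<forall>x\<in>K. b x * v i + d x * v j + mult_on D K v x = 0)" for v
    using row_i row_j row_K ij unfolding kernel_on_def by (auto simp: bit_add_eq_0_iff add.assoc)
  show "kernel_on K ?B v" if "kernel_on ?I ?A v" for v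
  proof -
    have vj: "v j = ?T v" and vi: "v i = c * v j + ?U v"
      and rows: "\<forall>x\<in>K. b x * v i + d x * v j + mult_on D K v x = 0"
      using kernel_A[THEN iffD1, OF that] by blast+
    show ?thesis
      unfolding kernel_on_def using rows by (simp only: row_B[OF vj vi])
  qed
  show "\<exists>v. kernel_on ?I ?A v \<and> (\<forall>x\<in>K. v x = w x)" if "kernel_on K ?B w" for w
  proof (intro exI conjI)
    let ?v = "w(j := ?T w, i := c * ?T w + ?U w)"
    have agree: "\<forall>x\<in>K. ?v x = w x"
      using assms(2,3) by auto
    then have "?T ?v = ?T w" "?U ?v = ?U w"
      by (auto intro: sum.cong)
    then have vj: "?v j = ?T ?v" and vi: "?v i = c * ?v j + ?U ?v"
      using ij by simp_all
    have "b x * ?v i + d x * ?v j + mult_on D K ?v x = 0" if "x \<in> K" for x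
    proof -
      have "b x * ?v i + d x * ?v j + mult_on D K ?v x = mult_on ?B K ?v x"
        by (rule row_B[OF vj vi, symmetric])
      also have "\<dots> = mult_on ?B K w x"
        using agree by (auto intro: mult_on_cong)
      finally show ?thesis
        using \<open>kernel_on K ?B w\<close> that unfolding kernel_on_def by simp
    qed
    then show "kernel_on ?I ?A ?v"
      using kernel_A vj vi by blast
  qed (use assms(2,3) in auto)
  show "\<forall>x\<in>?I. v x = 0" if "kernel_on ?I ?A v" "\<forall>x\<in>K. v x = 0" for v
    using kernel_A[THEN iffD1, OF that(1)] that(2) by simp
qed auto

section \<open>Counting nonsingular symmetric matrices\<close>

lemma card_filter_bij_betw:
  assumes "bij_betw f A B"
  shows "card {y \<in> B. P y} = card {x \<in> A. P (f x)}"
proof -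
  have "f ` {x \<in> A. P (f x)} = {y \<in> B. P y}"
    using bij_betw_imp_surj_on[OF assms] by blast
  then have "bij_betw f {x \<in> A. P (f x)} {y \<in> B. P y}"
    using assms by (rule bij_betw_subset[rotated 2]) blast
  then show ?thesis
    by (simp add: bij_betw_same_card)
qed

lemma card_filter_sym_mats_on_insert:
  assumes "finite J" "i \<notin> J"
  shows "card {A \<in> sym_mats_on (insert i J). P A}
    = (\<Sum>a\<in>UNIV. \<Sum>b\<in>supp_vecs J. card {C \<in> sym_mats_on J. P (border i a b C)})"
proof -
  have "{t \<in> UNIV \<times> supp_vecs J \<times> sym_mats_on J. P (case t of (a, b, C) \<Rightarrow> border i a b C)}
      = (SIGMA a:UNIV. SIGMA b:supp_vecs J. {C \<in> sym_mats_on J. P (border i a b C)})"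
    by auto
  moreover have "finite {C \<in> sym_mats_on J. P (border i a b C)}" for a b
    using finite_sym_mats_on[OF assms(1)] by simp
  ultimately show ?thesis
    using card_filter_bij_betw[OF bij_betw_border[OF assms(2)], of P] finite_supp_vecs[OF assms(1)]
    by (simp add: card_SigmaI bit_UNIV)
qed

lemma card_nonsingular_translate:
  assumes "F \<in> sym_mats_on J"
  shows "card {C \<in> sym_mats_on J. nonsingular_on J (\<lambda>x y. C x y + F x y)} = card (nonsingular_sym_on J)"
proof -
  have "bij_betw (\<lambda>C x y. C x y + F x y) (sym_mats_on J) (sym_mats_on J)"
    by (rule bij_betwI[where g = "\<lambda>C x y. C x y + F x y"])
       (use sym_mats_on_add[OF _ assms] in \<open>auto simp: add.assoc\<close>)
  then show ?thesis
    unfolding nonsingular_sym_on_def by (rule card_filter_bij_betw[symmetric])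
qed

lemma card_nonsingular_border_one:
  assumes "finite J" "i \<notin> J" "b \<in> supp_vecs J"
  shows "card {C \<in> sym_mats_on J. nonsingular_on (insert i J) (border i 1 b C)} = card (nonsingular_sym_on J)"
  using card_nonsingular_translate[OF outer_in_sym_mats_on[OF assms(3)]]
  by (simp add: nonsingular_border_one[OF assms(1,2)])

lemma card_nonsingular_border_hyperbolic:
  assumes "finite K" "i \<notin> insert j K" "j \<notin> K" "b \<in> supp_vecs K"
  shows "card {C \<in> sym_mats_on (insert j K). nonsingular_on (insert i (insert j K)) (border i 0 (b(j := 1)) C)}
    = 2 * 2 ^ card K * card (nonsingular_sym_on K)"
proof -
  have "card {C \<in> sym_mats_on (insert j K). nonsingular_on (insert i (insert j K)) (border i 0 (b(j := 1)) C)}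
      = (\<Sum>c\<in>UNIV. \<Sum>d\<in>supp_vecs K.
          card {D \<in> sym_mats_on K. nonsingular_on K (\<lambda>x y. D x y + pivot_term c b d x y)})"
    using card_filter_sym_mats_on_insert[OF assms(1,3)]
    by (simp add: nonsingular_border_hyperbolic[OF assms(1-3)])
  also have "\<dots> = (\<Sum>c::bit\<in>UNIV. \<Sum>d\<in>supp_vecs K. card (nonsingular_sym_on K))"
    using card_nonsingular_translate[OF pivot_term_in_sym_mats_on[OF assms(4)]] by simp
  also have "\<dots> = card (UNIV :: bit set) * card (supp_vecs K) * card (nonsingular_sym_on K)"
    by simp
  finally show ?thesis
    using card_supp_vecs[OF assms(1)] by (simp add: bit_UNIV)
qed

lemma card_nonsingular_sym_on_insert:
  assumes "finite J" "i \<notin> J"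
    and hyp: "\<And>K. K \<subseteq> J \<Longrightarrow> card K = card J - 1 \<Longrightarrow> card (nonsingular_sym_on K) = g"
  shows "card (nonsingular_sym_on (insert i J))
    = 2 ^ card J * card (nonsingular_sym_on J) + (2 ^ card J - 1) * 2 ^ card J * g"
proof -
  let ?N = "\<lambda>a b. card {C \<in> sym_mats_on J. nonsingular_on (insert i J) (border i a b C)}"
  have zero_in: "(\<lambda>_. 0) \<in> supp_vecs J"
    unfolding supp_vecs_def by simp
  have N_zero: "?N 0 (\<lambda>_. 0) = 0"
    using singular_border_zero[OF assms(1,2)] by simp
  have N_nonzero: "?N 0 b = 2 ^ card J * g" if b: "b \<in> supp_vecs J - {\<lambda>_. 0}" for b
  proof -
    obtain j where "b j \<noteq> 0"
      using b by (auto simp: fun_eq_iff)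
    then have j: "j \<in> J" "b j = 1"
      using b by (auto simp: supp_vecs_def)
    define K where "K = J - {j}"
    have J: "J = insert j K" "j \<notin> K" "finite K" "card J = Suc (card K)"
      unfolding K_def using j assms(1) card_Suc_Diff1[OF assms(1) j(1)] by auto
    have "(b(j := 0))(j := 1) = b" and "b(j := 0) \<in> supp_vecs K"
      using b j unfolding K_def supp_vecs_def by auto
    then have "?N 0 b = 2 * 2 ^ card K * card (nonsingular_sym_on K)"
      using card_nonsingular_border_hyperbolic[of K i j "b(j := 0)"] J assms(2) by simp
    also have "card (nonsingular_sym_on K) = g"
      using hyp[of K] J by auto
    finally show ?thesis
      using J by simp
  qed
  have "card (nonsingular_sym_on (insert i J)) = (\<Sum>b\<in>supp_vecs J. ?N 0 b) + (\<Sum>b\<in>supp_vecs J. ?N 1 b)"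
    unfolding nonsingular_sym_on_def card_filter_sym_mats_on_insert[OF assms(1,2)] by (simp add: bit_UNIV)
  also have "(\<Sum>b\<in>supp_vecs J. ?N 0 b) = ?N 0 (\<lambda>_. 0) + (\<Sum>b\<in>supp_vecs J - {\<lambda>_. 0}. ?N 0 b)"
    using sum.remove[OF finite_supp_vecs[OF assms(1)] zero_in] .
  also have "\<dots> = (2 ^ card J - 1) * 2 ^ card J * g"
    using N_zero N_nonzero card_supp_vecs[OF assms(1)] finite_supp_vecs[OF assms(1)] zero_in by simp
  also have "(\<Sum>b\<in>supp_vecs J. ?N 1 b) = 2 ^ card J * card (nonsingular_sym_on J)"
    using card_nonsingular_border_one[OF assms(1,2)] card_supp_vecs[OF assms(1)] by simp
  finally show ?thesis
    by simp
qed

fun nonsingular_sym_count :: "nat \<Rightarrow> nat" where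
  "nonsingular_sym_count 0 = 1"
| "nonsingular_sym_count (Suc 0) = 1"
| "nonsingular_sym_count (Suc (Suc n)) = 2 ^ Suc n * nonsingular_sym_count (Suc n)
     + (2 ^ Suc n - 1) * 2 ^ Suc n * nonsingular_sym_count n"

lemma nonsingular_sym_on_empty: "nonsingular_sym_on {} = {\<lambda>_ _. 0}"
  unfolding nonsingular_sym_on_def sym_mats_on_def nonsingular_on_def by (auto simp: fun_eq_iff)

lemma card_nonsingular_sym_on:
  "finite I \<Longrightarrow> card (nonsingular_sym_on I) = nonsingular_sym_count (card I)"
proof (induction "card I" arbitrary: I rule: nonsingular_sym_count.induct)
  case 1
  then show ?case
    by (simp add: nonsingular_sym_on_empty)
next
  case 2
  then obtain i where "I = insert i {}"
    by (metis One_nat_def card_1_singletonE)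
  then show ?case
    using card_nonsingular_sym_on_insert[of "{}" i 1] by (simp add: nonsingular_sym_on_empty)
next
  case (3 n)
  then obtain i J where I: "I = insert i J" "i \<notin> J" "finite J" "card J = Suc n"
    by (metis card_Suc_eq_finite finite_insert)
  have "card (nonsingular_sym_on K) = nonsingular_sym_count n" if "K \<subseteq> J" "card K = card J - 1" for K
    using 3(2)[of K] that I(4) finite_subset[OF that(1) I(3)] by simp
  then show ?case
    using card_nonsingular_sym_on_insert[OF I(3,2)] 3(1)[of J] I by simp
qed

section \<open>Solving the recurrence\<close>

lemma u_Suc_Suc:
  "u (Suc (Suc n)) * 2 ^ Suc n = (if even n then 2 ^ Suc n - 1 else 2 ^ Suc n) * u (Suc n)"
proof (cases "even n")
  case True
  then obtain m where n: "n = 2 * m"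
    by blast
  have "(2::real) powi (1 - 2 * int (Suc m)) = 2 powi (- int (Suc n))"
    using n by (intro arg_cong[where f = "power_int 2"]) simp
  also have "\<dots> = inverse (2 ^ Suc n)"
    by (simp only: power_int_minus power_int_of_nat)
  finally have "u (Suc (Suc n)) = (1 - inverse (2 ^ Suc n)) * u (Suc n)"
    unfolding u_def using n by (simp add: prod.nat_ivl_Suc')
  then show ?thesis
    using True by (simp add: field_simps)
next
  case False
  then have "Suc (Suc n) div 2 = Suc n div 2"
    by simp
  then show ?thesis
    using False unfolding u_def by simp
qed

lemma real_nonsingular_sym_count_Suc_Suc:
  "real (nonsingular_sym_count (Suc (Suc n)))
    = 2 ^ Suc n * real (nonsingular_sym_count (Suc n))
      + (2 ^ Suc n - 1) * 2 ^ Suc n * real (nonsingular_sym_count n)"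
  by (simp add: of_nat_diff)

lemma real_nonsingular_sym_count_Suc:
  "real (nonsingular_sym_count (Suc n))
    = (if even n then 2 ^ Suc n - 1 else 2 ^ Suc n) * real (nonsingular_sym_count n)"
proof (induction n)
  case 0
  then show ?case by simp
next
  case (Suc n)
  then show ?case
    unfolding real_nonsingular_sym_count_Suc_Suc by (auto simp: algebra_simps)
qed

lemma real_nonsingular_sym_count:
  "real (nonsingular_sym_count n) = u (Suc n) * 2 ^ (Suc n choose 2)"
proof (induction n)
  case 0
  then show ?case by (simp add: u_def numeral_2_eq_2)
next
  case (Suc n)
  let ?F = "if even n then 2 ^ Suc n - 1 else 2 ^ Suc n :: real"
  have "real (nonsingular_sym_count (Suc n)) = ?F * u (Suc n) * 2 ^ (Suc n choose 2)"
    using Suc real_nonsingular_sym_count_Suc[of n] by simp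
  also have "\<dots> = u (Suc (Suc n)) * 2 ^ (Suc n + (Suc n choose 2))"
    using u_Suc_Suc[of n] by (simp add: power_add)
  also have "Suc n + (Suc n choose 2) = Suc (Suc n) choose 2"
    by (simp add: numeral_2_eq_2)
  finally show ?case .
qed

section \<open>Rank of symmetric matrices with zero row sums\<close>

context vec_space
begin

lemma rank_le_card_span:
  assumes A: "A \<in> carrier_mat n nc" and T: "T \<subseteq> carrier_vec n" "finite T"
    and cols: "set (cols A) \<subseteq> span T"
  shows "rank A \<le> card T"
proof -
  obtain S where max: "maximal S (\<lambda>T. T \<subseteq> set (cols A) \<and> lin_indpt T)"
    using maximal_exists[of "\<lambda>T. T \<subseteq> set (cols A) \<and> lin_indpt T" "card (set (cols A))" "{}"]
    by (meson List.finite_set card_mono empty_iff empty_subsetI finite_lin_indpt2 rev_finite_subset)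
  then have S: "S \<subseteq> set (cols A)" "lin_indpt S" "finite S"
    unfolding maximal_def using finite_subset by auto
  then have "\<exists>C :: 'a vec set. int (card C) \<le> int (card T) - int (card S)"
    using replacement[OF S(3) T(2) T(1) S(2)] cols by blast
  then show ?thesis
    unfolding rank_card_indpt[OF A max] by linarith
qed

lemma vec_sum_in_span:
  assumes T: "T \<subseteq> carrier_vec n" and "finite L" and "\<And>l. l \<in> L \<Longrightarrow> v l \<in> span T"
  shows "vec n (\<lambda>i. \<Sum>l\<in>L. v l $ i) \<in> span T"
  using assms(2,3)
proof (induction L rule: finite_induct)
  case empty
  have "vec n (\<lambda>i. \<Sum>l\<in>{}. v l $ i) = 0\<^sub>v n"
    by auto
  moreover have "submodule class_ring (span T) V"
    using span_is_submodule[OF T] .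
  ultimately show ?case
    using LinearCombinations.submodule.zero_closed[of class_ring "span T" V] by simp
next
  case (insert l L)
  have "v l \<in> carrier_vec n"
    using insert.prems span_is_subset2[OF T] by auto
  then have "vec n (\<lambda>i. \<Sum>l\<in>insert l L. v l $ i) = v l + vec n (\<lambda>i. \<Sum>l\<in>L. v l $ i)"
    using insert.hyps by auto
  then show ?case
    using span_add1[OF T] insert by simp
qed

lemma rank_le_card_generating_cols:
  assumes A: "A \<in> carrier_mat n nc" and J: "J \<subseteq> {..<nc}"
    and sums: "\<And>j. j < nc \<Longrightarrow> j \<notin> J \<Longrightarrow>
      \<exists>L \<subseteq> J. col A j = vec n (\<lambda>i. \<Sum>l\<in>L. A $$ (i, l))"
  shows "rank A \<le> card J"
proof -
  let ?T = "col A ` J"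
  have fin: "finite J"
    using J finite_subset by blast
  have T: "?T \<subseteq> carrier_vec n"
    using A by auto
  have T_span: "?T \<subseteq> span ?T"
    using in_own_span[OF T] .
  have "col A j \<in> span ?T" if j: "j < nc" for j
  proof (cases "j \<in> J")
    case True
    then show ?thesis
      using T_span by blast
  next
    case False
    then obtain L where L: "L \<subseteq> J" "col A j = vec n (\<lambda>i. \<Sum>l\<in>L. A $$ (i, l))"
      using sums j by blast
    have "vec n (\<lambda>i. \<Sum>l\<in>L. col A l $ i) \<in> span ?T"
      using vec_sum_in_span[OF T finite_subset[OF L(1) fin], of "col A"] L(1) T_span by blast
    moreover have "vec n (\<lambda>i. \<Sum>l\<in>L. col A l $ i) = vec n (\<lambda>i. \<Sum>l\<in>L. A $$ (i, l))"
    proof (rule eq_vecI)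
      fix i assume "i < dim_vec (vec n (\<lambda>i. \<Sum>l\<in>L. A $$ (i, l)))"
      then have i: "i < n"
        by simp
      have "col A l $ i = A $$ (i, l)" if "l \<in> L" for l
        using that L(1) J A i by auto
      then show "vec n (\<lambda>i. \<Sum>l\<in>L. col A l $ i) $ i = vec n (\<lambda>i. \<Sum>l\<in>L. A $$ (i, l)) $ i"
        using i by simp
    qed simp
    ultimately show ?thesis
      using L(2) by simp
  qed
  then have "set (cols A) \<subseteq> span ?T"
    using A by (metis carrier_matD(2) cols_length cols_nth in_set_conv_nth subsetI)
  then have "rank A \<le> card ?T"
    using rank_le_card_span[OF A T] fin by blast
  also have "\<dots> \<le> card J"
    using card_image_le[OF fin] .
  finally show ?thesis .
qed

end

lemma rank_le_of_row_sums_zero: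
  fixes A :: "'a :: field mat"
  assumes A: "A \<in> carrier_mat (Suc n) (Suc n)"
    and sums: "\<And>i. i < Suc n \<Longrightarrow> (\<Sum>j<Suc n. A $$ (i, j)) = 0"
  shows "vec_space.rank (Suc n) A \<le> n"
proof -
  let ?one = "vec (Suc n) (\<lambda>_. 1 :: 'a)"
  have "A *\<^sub>v ?one = 0\<^sub>v (Suc n)"
    using A sums by (intro eq_vecI) (auto simp: scalar_prod_def atLeast0LessThan)
  moreover have "?one \<noteq> 0\<^sub>v (Suc n)"
    by (metis index_vec index_zero_vec(1) zero_less_Suc zero_neq_one)
  moreover have "?one \<in> carrier_vec (Suc n)"
    by simp
  ultimately have "det A = 0"
    using det_0_iff_vec_prod_zero_field[OF A] by blast
  then show ?thesis
    using vec_space.det_rank_iff[OF A] vec_space.rank_le_nc[OF A] by fastforce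
qed

lemma transpose_mat_eq_entry_sym:
  assumes "A \<in> carrier_mat m m" "transpose_mat A = A" "i < m" "j < m"
  shows "A $$ (i, j) = A $$ (j, i)"
  using assms by (metis carrier_matD index_transpose_mat(1))

definition upper_block :: "nat \<Rightarrow> bit mat \<Rightarrow> nat \<Rightarrow> nat \<Rightarrow> bit" where
  "upper_block n A i j = (if i < n \<and> j < n then A $$ (i, j) else 0)"

definition zero_sum_completion :: "nat \<Rightarrow> (nat \<Rightarrow> nat \<Rightarrow> bit) \<Rightarrow> bit mat" where
  "zero_sum_completion n S = mat (Suc n) (Suc n) (\<lambda>(i, j).
     if i < n \<and> j < n then S i j
     else if i < n then (\<Sum>l<n. S i l)
     else if j < n then (\<Sum>l<n. S j l)
     else (\<Sum>l<n. \<Sum>m<n. S l m))"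

lemma zero_sum_completion_carrier: "zero_sum_completion n S \<in> carrier_mat (Suc n) (Suc n)"
  by (simp add: zero_sum_completion_def)

lemma row_sum_zero_sum_completion:
  assumes "i < Suc n"
  shows "(\<Sum>j<Suc n. zero_sum_completion n S $$ (i, j)) = 0"
proof -
  have "(\<Sum>j<n. zero_sum_completion n S $$ (i, j))
      = (if i < n then (\<Sum>l<n. S i l) else (\<Sum>j<n. \<Sum>l<n. S j l))"
    using assms by (auto simp: zero_sum_completion_def intro: sum.cong)
  then show ?thesis
    using assms by (simp add: zero_sum_completion_def)
qed

lemma transpose_zero_sum_completion:
  assumes "S \<in> sym_mats_on {..<n}"
  shows "transpose_mat (zero_sum_completion n S) = zero_sum_completion n S"
  using assms by (intro eq_matI) (auto simp: zero_sum_completion_def sym_mats_on_def)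

lemma upper_block_zero_sum_completion:
  assumes "S \<in> sym_mats_on {..<n}"
  shows "upper_block n (zero_sum_completion n S) = S"
  using assms unfolding sym_mats_on_def
  by (auto simp: fun_eq_iff upper_block_def zero_sum_completion_def) metis

lemma upper_block_in_sym_mats_on:
  assumes "A \<in> carrier_mat (Suc n) (Suc n)" "transpose_mat A = A"
  shows "upper_block n A \<in> sym_mats_on {..<n}"
  using transpose_mat_eq_entry_sym[OF assms] unfolding sym_mats_on_def upper_block_def by auto

lemma last_entry_eq_sum:
  fixes A :: "bit mat"
  assumes "(\<Sum>j<Suc n. A $$ (i, j)) = 0"
  shows "A $$ (i, n) = (\<Sum>l<n. A $$ (i, l))"
proof -
  have "(\<Sum>l<n. A $$ (i, l)) + A $$ (i, n) = 0"
    using assms by simp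
  then show ?thesis
    by (simp add: bit_add_eq_0_iff)
qed

lemma zero_sum_completion_upper_block:
  fixes A :: "bit mat"
  assumes A: "A \<in> carrier_mat (Suc n) (Suc n)" and sym: "transpose_mat A = A"
    and sums: "\<And>i. i < Suc n \<Longrightarrow> (\<Sum>j<Suc n. A $$ (i, j)) = 0"
  shows "zero_sum_completion n (upper_block n A) = A"
proof (rule eq_matI)
  have A_sym: "A $$ (i, j) = A $$ (j, i)" if "i < Suc n" "j < Suc n" for i j
    using transpose_mat_eq_entry_sym[OF A sym that] .
  have last: "A $$ (i, n) = (\<Sum>l<n. A $$ (i, l))" if "i < Suc n" for i
    using last_entry_eq_sum[OF sums[OF that]] .
  have block_sum: "(\<Sum>l<n. upper_block n A i l) = A $$ (i, n)" if "i < n" for i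
    using that last[of i] by (simp add: upper_block_def)
  have corner: "(\<Sum>l<n. \<Sum>m<n. upper_block n A l m) = A $$ (n, n)"
  proof -
    have "(\<Sum>l<n. \<Sum>m<n. upper_block n A l m) = (\<Sum>l<n. A $$ (n, l))"
      using block_sum A_sym by (intro sum.cong) auto
    then show ?thesis
      using last[of n] by simp
  qed
  fix i j assume "i < dim_row A" "j < dim_col A"
  then consider "i < n" "j < n" | "i < n" "j = n" | "i = n" "j < n" | "i = n" "j = n"
    using A by fastforce
  then show "zero_sum_completion n (upper_block n A) $$ (i, j) = A $$ (i, j)"
  proof cases
    case 1
    then show ?thesis by (simp add: zero_sum_completion_def upper_block_def)
  next
    case 2
    then show ?thesis using block_sum by (simp add: zero_sum_completion_def)
  next
    case 3
    then show ?thesis using block_sum A_sym[of j n] by (simp add: zero_sum_completion_def)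
  next
    case 4
    then show ?thesis using corner by (simp add: zero_sum_completion_def)
  qed
qed (use A in \<open>auto simp: zero_sum_completion_def\<close>)

lemma pick_lessThan: "i < n \<Longrightarrow> pick {..<n} i = i"
proof (induction i)
  case 0
  then show ?case by (simp add: Least_equality)
next
  case (Suc i)
  then show ?case by (simp, intro Least_equality) auto
qed

lemma rank_zero_sum_completion_ge:
  assumes "nonsingular_on {..<n} S"
  shows "n \<le> vec_space.rank (Suc n) (zero_sum_completion n S)"
proof -
  let ?A = "zero_sum_completion n S"
  let ?M = "submatrix ?A {..<n} {..<n}"
  have rows: "{i. i < Suc n \<and> i \<in> {..<n}} = {..<n}" "{i. i < Suc n \<and> i < n} = {..<n}"
    by auto
  have M: "?M \<in> carrier_mat n n"
    unfolding carrier_mat_def by (simp add: dim_submatrix zero_sum_completion_def rows)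
  have M_entries: "?M $$ (i, j) = S i j" if "i < n" "j < n" for i j
    using that submatrix_index[of i ?A "{..<n}" j "{..<n}"]
    by (simp add: rows pick_lessThan zero_sum_completion_def)
  have "det ?M \<noteq> 0"
  proof
    assume "det ?M = 0"
    then obtain v where v: "v \<in> carrier_vec n" "v \<noteq> 0\<^sub>v n" "?M *\<^sub>v v = 0\<^sub>v n"
      using det_0_iff_vec_prod_zero_field[OF M] by auto
    define w where "w j = (if j < n then v $ j else 0)" for j
    have "mult_on S {..<n} w x = (?M *\<^sub>v v) $ x" if "x < n" for x
      unfolding mult_on_def w_def using that v(1) M M_entries
      by (auto simp: scalar_prod_def atLeast0LessThan intro!: sum.cong)
    then have "kernel_on {..<n} S w"
      unfolding kernel_on_def using v(3) by simp
    then have "v = 0\<^sub>v n"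
      using assms v(1) unfolding nonsingular_on_def w_def by (intro eq_vecI) auto
    then show False
      using v(2) by simp
  qed
  then show ?thesis
    using vec_space.rank_gt_minor[OF zero_sum_completion_carrier] rows by fastforce
qed

lemma mult_on_eq_sum_support:
  "finite J \<Longrightarrow> mult_on C J w x = (\<Sum>l\<in>{l \<in> J. w l = 1}. C x l)"
  unfolding mult_on_def by (subst sum.inter_filter) (auto intro: sum.cong)

lemma col_eq_sum_other_cols:
  fixes A :: "bit mat"
  assumes A: "A \<in> carrier_mat nr nc" and "finite W" "j \<in> W" "j < nc"
    and sums: "\<And>i. i < nr \<Longrightarrow> (\<Sum>l\<in>W. A $$ (i, l)) = 0"
  shows "col A j = vec nr (\<lambda>i. \<Sum>l\<in>W - {j}. A $$ (i, l))"
proof (rule eq_vecI)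
  fix i assume "i < dim_vec (vec nr (\<lambda>i. \<Sum>l\<in>W - {j}. A $$ (i, l)))"
  then have i: "i < nr"
    by simp
  have "A $$ (i, j) + (\<Sum>l\<in>W - {j}. A $$ (i, l)) = 0"
    using sums[OF i] sum.remove[OF assms(2,3), of "\<lambda>l. A $$ (i, l)"] by simp
  then show "col A j $ i = vec nr (\<lambda>i. \<Sum>l\<in>W - {j}. A $$ (i, l)) $ i"
    using A i assms(4) by (simp add: bit_add_eq_0_iff)
qed (use A in simp)

lemma sum_kernel_cols_zero_sum_completion:
  assumes S: "S \<in> sym_mats_on {..<n}" and w: "kernel_on {..<n} S w" and i: "i < Suc n"
  shows "(\<Sum>l\<in>{l \<in> {..<n}. w l = 1}. zero_sum_completion n S $$ (i, l)) = 0"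
proof -
  let ?A = "zero_sum_completion n S"
  let ?W = "{l \<in> {..<n}. w l = 1}"
  have row_W: "(\<Sum>l\<in>?W. S x l) = 0" if "x < n" for x
    using w that unfolding kernel_on_def by (simp add: mult_on_eq_sum_support)
  show ?thesis
  proof (cases "i < n")
    case True
    have "(\<Sum>l\<in>?W. ?A $$ (i, l)) = (\<Sum>l\<in>?W. S i l)"
      using True by (intro sum.cong) (auto simp: zero_sum_completion_def)
    then show ?thesis
      using row_W True by simp
  next
    case False
    have "?A $$ (i, l) = (\<Sum>m<n. S m l)" if "l \<in> ?W" for l
    proof -
      have "?A $$ (i, l) = (\<Sum>m<n. S l m)"
        using False i that by (auto simp: zero_sum_completion_def)
      also have "\<dots> = (\<Sum>m<n. S m l)"
        using S unfolding sym_mats_on_def by (intro sum.cong refl) blast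
      finally show ?thesis .
    qed
    then have "(\<Sum>l\<in>?W. ?A $$ (i, l)) = (\<Sum>l\<in>?W. \<Sum>m<n. S m l)"
      by (rule sum.cong[OF refl])
    also have "\<dots> = (\<Sum>m<n. \<Sum>l\<in>?W. S m l)"
      by (rule sum.swap)
    finally show ?thesis
      using row_W by simp
  qed
qed

lemma sum_complement_cols_eq_zero:
  fixes A :: "bit mat"
  assumes "(\<Sum>j<Suc n. A $$ (i, j)) = 0" "W \<subseteq> {..<n}" "(\<Sum>l\<in>W. A $$ (i, l)) = 0"
  shows "(\<Sum>l\<in>insert n ({..<n} - W). A $$ (i, l)) = 0"
proof -
  have "A $$ (i, n) = (\<Sum>l<n. A $$ (i, l))"
    using last_entry_eq_sum[OF assms(1)] .
  also have "\<dots> = (\<Sum>l\<in>{..<n} - W. A $$ (i, l)) + (\<Sum>l\<in>W. A $$ (i, l))"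
    by (rule sum.subset_diff[OF assms(2)]) simp
  finally show ?thesis
    using assms(3) by simp
qed

lemma rank_zero_sum_completion_lt:
  assumes S: "S \<in> sym_mats_on {..<n}" and singular: "\<not> nonsingular_on {..<n} S"
  shows "vec_space.rank (Suc n) (zero_sum_completion n S) < n"
proof -
  let ?A = "zero_sum_completion n S"
  obtain w j0 where w: "kernel_on {..<n} S w" and j0: "j0 < n" "w j0 = 1"
    using singular unfolding nonsingular_on_def by auto
  define W where "W = {l \<in> {..<n}. w l = 1}"
  have W: "finite W" "W \<subseteq> {..<n}" "j0 \<in> W"
    using j0 unfolding W_def by auto
  have W_sums: "(\<Sum>l\<in>W. ?A $$ (i, l)) = 0" if "i < Suc n" for i
    using sum_kernel_cols_zero_sum_completion[OF S w that] unfolding W_def .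
  have rest_sums: "(\<Sum>l\<in>insert n ({..<n} - W). ?A $$ (i, l)) = 0" if "i < Suc n" for i
    using sum_complement_cols_eq_zero[OF row_sum_zero_sum_completion[OF that] W(2) W_sums[OF that]] .
  let ?J = "{..<n} - {j0}"
  have "vec_space.rank (Suc n) ?A \<le> card ?J"
  proof (rule vec_space.rank_le_card_generating_cols[OF zero_sum_completion_carrier])
    fix j assume j: "j < Suc n" "j \<notin> ?J"
    then consider "j = j0" | "j = n"
      by fastforce
    then show "\<exists>L \<subseteq> ?J. col ?A j = vec (Suc n) (\<lambda>i. \<Sum>l\<in>L. ?A $$ (i, l))"
    proof cases
      case 1
      have "col ?A j0 = vec (Suc n) (\<lambda>i. \<Sum>l\<in>W - {j0}. ?A $$ (i, l))"
        using col_eq_sum_other_cols[OF zero_sum_completion_carrier W(1,3) _ W_sums] j0(1) by simp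
      moreover have "W - {j0} \<subseteq> ?J"
        using W(2) by auto
      ultimately show ?thesis
        using 1 by blast
    next
      case 2
      have "col ?A n = vec (Suc n) (\<lambda>i. \<Sum>l\<in>insert n ({..<n} - W) - {n}. ?A $$ (i, l))"
        using col_eq_sum_other_cols[OF zero_sum_completion_carrier _ insertI1 _ rest_sums] by simp
      moreover have "insert n ({..<n} - W) - {n} \<subseteq> ?J"
        using W(3) by auto
      ultimately show ?thesis
        using 2 by blast
    qed
  qed auto
  also have "card ?J < n"
    using j0(1) by simp
  finally show ?thesis .
qed

lemma rank_zero_sum_completion_eq_iff:
  assumes "S \<in> sym_mats_on {..<n}"
  shows "vec_space.rank (Suc n) (zero_sum_completion n S) = n \<longleftrightarrow> nonsingular_on {..<n} S"
proof -
  have "vec_space.rank (Suc n) (zero_sum_completion n S) \<le> n"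
    by (intro rank_le_of_row_sums_zero zero_sum_completion_carrier row_sum_zero_sum_completion)
  then show ?thesis
    using rank_zero_sum_completion_ge[of n S] rank_zero_sum_completion_lt[OF assms] by fastforce
qed

lemma B_set_Suc_eq_image:
  "B_set (Suc n) = zero_sum_completion n ` nonsingular_sym_on {..<n}"
proof
  show "B_set (Suc n) \<subseteq> zero_sum_completion n ` nonsingular_sym_on {..<n}"
  proof
    fix A assume "A \<in> B_set (Suc n)"
    then have A: "A \<in> carrier_mat (Suc n) (Suc n)" "transpose_mat A = A" "vec_space.rank (Suc n) A = n"
      and sums: "\<And>i. i < Suc n \<Longrightarrow> (\<Sum>j<Suc n. A $$ (i, j)) = 0"
      unfolding B_set_def by auto
    have A_eq: "A = zero_sum_completion n (upper_block n A)"
      using zero_sum_completion_upper_block[OF A(1,2) sums] by simp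
    have "upper_block n A \<in> sym_mats_on {..<n}"
      using upper_block_in_sym_mats_on[OF A(1,2)] .
    then show "A \<in> zero_sum_completion n ` nonsingular_sym_on {..<n}"
      using rank_zero_sum_completion_eq_iff A(3) A_eq unfolding nonsingular_sym_on_def by force
  qed
next
  show "zero_sum_completion n ` nonsingular_sym_on {..<n} \<subseteq> B_set (Suc n)"
    using zero_sum_completion_carrier transpose_zero_sum_completion rank_zero_sum_completion_eq_iff
      row_sum_zero_sum_completion
    unfolding B_set_def nonsingular_sym_on_def by auto
qed

lemma card_B_set_Suc: "card (B_set (Suc n)) = card (nonsingular_sym_on {..<n})"
proof -
  have "inj_on (zero_sum_completion n) (nonsingular_sym_on {..<n})"
    by (rule inj_on_inverseI[where g = "upper_block n"])
       (simp add: upper_block_zero_sum_completion nonsingular_sym_on_def)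
  then show ?thesis
    unfolding B_set_Suc_eq_image by (rule card_image)
qed

theorem mainTheorem7:
  fixes k :: nat
  assumes "k \<ge> 1"
  shows "real (card (B_set k)) = u k * 2 ^ (k choose 2)"
proof -
  obtain n where k: "k = Suc n"
    using assms by (cases k) auto
  have "card (B_set k) = nonsingular_sym_count n"
    unfolding k card_B_set_Suc using card_nonsingular_sym_on[of "{..<n}"] by simp
  then show ?thesis
    unfolding k using real_nonsingular_sym_count by simp
qed

end
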